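(* Let $\mu>0$, let $a\in\left(-\frac{2\mu}{9},0\right)\cup\left(0,\frac{4\mu}{9}\right)$ be real and let $s_1\in\left[\frac{2\mu}{3},\infty\right)$. Define $$H(\tilde z;s_1,a)=\frac{27a^2\tilde z\,(2s_1-3a)}{27a^3\tilde z-27a^2\tilde z\,s_1-(\tilde z-1)^2s_1^3},\qquad \beta_1(a,s_1)=\frac{27a^2}{s_1^3}(3a-2s_1),$$ and $F(\tilde z;s_1,a)=H(\tilde z;s_1,a)/\beta_1(a,s_1)$. Then $F(\cdot\,;s_1,a)$ is a schlicht function on the unit disc, i.e. it is holomorphic and injective on $\{|\tilde z|<1\}$ with $F(0)=0$ and $F'(0)=1$; equivalently, $H(\cdot\,;s_1,a)$ is univalent on the unit disc $|\tilde z|<1$.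
   Context: A function is univalent on a domain if it is holomorphic and injective there. A schlicht function is a univalent function $f$ on the open unit disc with $f(0)=0$ and $f'(0)=1$. *)

theory Defs
  imports "HOL-Complex_Analysis.Complex_Analysis"
begin

definition univalent_on :: "(complex \<Rightarrow> complex) \<Rightarrow> complex set \<Rightarrow> bool" where
  "univalent_on f S \<longleftrightarrow> f holomorphic_on S \<and> inj_on f S"

definition schlicht :: "(complex \<Rightarrow> complex) \<Rightarrow> bool" where
  "schlicht f \<longleftrightarrow> univalent_on f (ball 0 1) \<and> f 0 = 0 \<and> deriv f 0 = 1"

definition H :: "real \<Rightarrow> real \<Rightarrow> complex \<Rightarrow> complex" where
  "H s1 a z = (27 * of_real a ^ 2 * z * (2 * of_real s1 - 3 * of_real a)) /
     (27 * of_real a ^ 3 * z - 27 * of_real a ^ 2 * z * of_real s1 - (z - 1) ^ 2 * of_real s1 ^ 3)"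

definition beta1 :: "real \<Rightarrow> real \<Rightarrow> real" where
  "beta1 a s1 = 27 * a ^ 2 / s1 ^ 3 * (3 * a - 2 * s1)"

definition F :: "real \<Rightarrow> real \<Rightarrow> complex \<Rightarrow> complex" where
  "F s1 a z = H s1 a z / of_real (beta1 a s1)"

end

theory Submission
  imports Defs
begin

text \<open>After cancelling the constant factors, \<open>F\<close> is \<open>z / (1 - w z + z\<^sup>2)\<close> with the real
  parameter \<open>w = 2 - 27 a\<^sup>2 (s\<^sub>1 - a) / s\<^sub>1\<^sup>3\<close>. The hypotheses give \<open>\<bar>w\<bar> \<le> 2\<close>, because
  \<open>4 s\<^sub>1\<^sup>3 - 27 a\<^sup>2 (s\<^sub>1 - a) = (s\<^sub>1 + 3 a) (3 a - 2 s\<^sub>1)\<^sup>2\<close>. For such \<open>w\<close> the roots of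
  \<open>1 - w z + z\<^sup>2\<close> lie on the unit circle, and equal values at \<open>z\<^sub>1, z\<^sub>2\<close> force
  \<open>(z\<^sub>1 - z\<^sub>2) (1 - z\<^sub>1 z\<^sub>2) = 0\<close>, which inside the disc means \<open>z\<^sub>1 = z\<^sub>2\<close>.\<close>

lemma real_quadratic_no_root_in_unit_disc:
  fixes z :: complex and w :: real
  assumes "\<bar>w\<bar> \<le> 2" "norm z < 1"
  shows "1 - of_real w * z + z\<^sup>2 \<noteq> 0"
proof
  assume root: "1 - of_real w * z + z\<^sup>2 = 0"
  define x y where "x = Re z" and "y = Im z"
  have re: "x\<^sup>2 - y\<^sup>2 - w * x + 1 = 0" and im: "2 * x * y - w * y = 0"
    using arg_cong[OF root, of Re] arg_cong[OF root, of Im]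
    by (simp_all add: power2_eq_square x_def y_def algebra_simps)
  have "(norm z)\<^sup>2 < 1"
    using assms(2) by (simp add: power_less_one_iff)
  then have inside: "x\<^sup>2 + y\<^sup>2 < 1"
    unfolding x_def y_def by (simp add: cmod_power2)
  show False
  proof (cases "y = 0")
    case True
    then have "x\<^sup>2 + 1 = w * x"
      using re by simp
    also have "\<dots> \<le> 2 * \<bar>x\<bar>"
      using assms(1) by (metis abs_ge_self abs_mult abs_ge_zero mult_right_mono order_trans)
    finally have "(\<bar>x\<bar> - 1)\<^sup>2 \<le> 0"
      by (simp add: power2_eq_square algebra_simps)
    then have "\<bar>x\<bar> = 1"
      by simp
    then have "x\<^sup>2 = 1"
      by (metis power2_abs one_power2)
    then show False
      using inside True by simp
  next
    case False
    have "(2 * x - w) * y = 0"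
      using im by (simp add: algebra_simps)
    then have "w = 2 * x"
      using False by simp
    then have "x\<^sup>2 + y\<^sup>2 = 1"
      using re by (simp add: power2_eq_square algebra_simps)
    then show False
      using inside by simp
  qed
qed

lemma schlicht_divide_real_quadratic:
  fixes w :: real
  assumes "\<bar>w\<bar> \<le> 2"
  shows "schlicht (\<lambda>z. z / (1 - of_real w * z + z\<^sup>2))"
    (is "schlicht ?f")
proof -
  have nonzero: "1 - of_real w * z + z\<^sup>2 \<noteq> 0" if "z \<in> ball 0 1" for z :: complex
    using real_quadratic_no_root_in_unit_disc[OF assms] that by simp
  have "?f holomorphic_on ball 0 1"
    using nonzero by (auto intro!: holomorphic_intros)
  moreover have "inj_on ?f (ball 0 1)"
  proof (rule inj_onI)
    fix z1 z2
    assume z1: "z1 \<in> ball 0 1" and z2: "z2 \<in> ball 0 1" and "?f z1 = ?f z2"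
    then have "z1 * (1 - of_real w * z2 + z2\<^sup>2) = z2 * (1 - of_real w * z1 + z1\<^sup>2)"
      using nonzero[OF z1] nonzero[OF z2] by (simp add: field_simps)
    then have "(z1 - z2) * (1 - z1 * z2) = 0"
      by (simp add: algebra_simps power2_eq_square)
    moreover have "norm (z1 * z2) < 1"
      using z1 z2 mult_strict_mono[of "norm z1" 1 "norm z2" 1] by (simp add: norm_mult)
    then have "z1 * z2 \<noteq> 1"
      by auto
    ultimately show "z1 = z2"
      by simp
  qed
  moreover have "(?f has_field_derivative 1) (at 0)"
    by (auto intro!: derivative_eq_intros)
  ultimately show ?thesis
    unfolding schlicht_def univalent_on_def by (simp add: DERIV_imp_deriv)
qed

lemma F_eq_divide_real_quadratic:
  assumes "s1 \<noteq> 0" "a \<noteq> 0" "3 * a \<noteq> 2 * s1"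
  shows "F s1 a = (\<lambda>z. z / (1 - of_real (2 - 27 * a\<^sup>2 * (s1 - a) / s1 ^ 3) * z + z\<^sup>2))"
proof
  fix z :: complex
  define w where "w = 2 - 27 * a\<^sup>2 * (s1 - a) / s1 ^ 3"
  define Q where "Q = 1 - of_real w * z + z\<^sup>2"
  define c where "c = 27 * a\<^sup>2 * (2 * s1 - 3 * a)"
  have "c \<noteq> 0"
    using assms unfolding c_def by simp
  have "27 * of_real a ^ 3 * z - 27 * of_real a ^ 2 * z * of_real s1
      - (z - 1) ^ 2 * of_real s1 ^ 3 = - of_real (s1 ^ 3) * Q"
    using assms(1) unfolding Q_def w_def
    by (simp add: field_simps power2_eq_square power3_eq_cube)
  then have H_eq: "H s1 a z = of_real c * z / (- of_real (s1 ^ 3) * Q)"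
    unfolding H_def c_def by simp
  have beta1_eq: "of_real (beta1 a s1) = - of_real c / (of_real s1 ^ 3 :: complex)"
    unfolding beta1_def c_def by (simp add: algebra_simps)
  show "F s1 a z = z / Q"
    using assms(1) \<open>c \<noteq> 0\<close> unfolding F_def H_eq beta1_eq
    by (cases "Q = 0") (simp_all add: field_simps)
qed

lemma abs_real_quadratic_parameter_le_2:
  fixes a s :: real
  assumes "s > 0" "s + 3 * a \<ge> 0" "a \<le> s"
  shows "\<bar>2 - 27 * a\<^sup>2 * (s - a) / s ^ 3\<bar> \<le> 2"
proof -
  have "4 * s ^ 3 - 27 * a\<^sup>2 * (s - a) = (s + 3 * a) * (3 * a - 2 * s)\<^sup>2"
    by (simp add: power2_eq_square power3_eq_cube algebra_simps)
  also have "\<dots> \<ge> 0"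
    using assms(2) by simp
  finally have "27 * a\<^sup>2 * (s - a) / s ^ 3 \<le> 4"
    using assms(1) by (simp add: field_simps)
  moreover have "27 * a\<^sup>2 * (s - a) / s ^ 3 \<ge> 0"
    using assms(1,3) by simp
  ultimately show ?thesis
    by linarith
qed

theorem lemma2:
  fixes \<mu> a s1 :: real
  assumes "\<mu> > 0"
    and "a \<in> {-(2*\<mu>/9)<..<0} \<union> {0<..<4*\<mu>/9}"
    and "s1 \<ge> 2*\<mu>/3"
  shows "schlicht (F s1 a)"
proof -
  define w where "w = 2 - 27 * a\<^sup>2 * (s1 - a) / s1 ^ 3"
  have "\<bar>w\<bar> \<le> 2"
    unfolding w_def using assms by (intro abs_real_quadratic_parameter_le_2) auto
  moreover have "F s1 a = (\<lambda>z. z / (1 - of_real w * z + z\<^sup>2))"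
    unfolding w_def using assms by (intro F_eq_divide_real_quadratic) auto
  ultimately show ?thesis
    by (simp add: schlicht_divide_real_quadratic)
qed

end
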